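(* Let $p,q$ be positive integers with $p+q$ odd. For every $n\ge1$: (a) $\mathcal{J}^{p,q}_n$ is a subgroup of $\mathrm{Aut}(T_{n+1})$; (b) $\psi_n:\mathcal{J}^{p,q}_n\to\mathbb{Z}_{2^{\lfloor n/2\rfloor}}$ is a group homomorphism; (c) $\Delta_n:\mathcal{J}^{p,q}_n\to D_{2^{\lfloor n/2\rfloor+1}}$ is a group homomorphism.
   Context: Let $p,q$ be positive integers with $p+q$ odd. $\mathbb{Z}_{2^k}$ denotes the integers modulo $2^k$ ($\mathbb{Z}_1$ trivial); as $p+q$ is odd, division by $p+q$ and by $(p+q)^2$ is well defined in $\mathbb{Z}_{2^k}$, and integers are read modulo $2^k$. For $m\ge1$, $D_{2m}$ is the dihedral group of order $2m$, realized as pairs $(f,x)$ with $f\in\mathbb{Z}_2$, $x\in\mathbb{Z}_m$ and product $(f_1,x_1)(f_2,x_2)=(f_1+f_2,\,x_1+(-1)^{f_1}x_2)$. Define $\Phi:D_{2m}\to D_{2m}$ by $\Phi((f,x))=(f,\ \delta(f=1)(p+q)(p-q)-x)$, where $\delta(f=1)$ is $1$ if $f=1$ and $0$ otherwise. Groups $\mathrm{Aut}(T_k)$ (automorphisms of the rooted binary tree, equivalently iterated wreath products of $\mathbb{Z}_2$): $\mathrm{Aut}(T_1)$ is trivial; for $k\ge1$, $\mathrm{Aut}(T_{k+1})$ is the set of triples $g=(g_f,g_L,g_R)$ with $g_f\in\mathbb{Z}_2$, $g_L,g_R\in\mathrm{Aut}(T_k)$, with product $(f,A,B)(g,C,D)=(f+g,AC,BD)$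 if $f=0$ and $(f+g,AD,BC)$ if $f=1$. Subscripts are chained: $g_{LR}=(g_L)_R$, $g_{Lf}=(g_L)_f$, etc. Recursively define subsets $\mathcal{J}^{p,q}_n\subseteq\mathrm{Aut}(T_{n+1})$ and maps $\psi_n:\mathcal{J}^{p,q}_n\to\mathbb{Z}_{2^{\lfloor n/2\rfloor}}$, $\Delta_n:\mathcal{J}^{p,q}_n\to D_{2^{\lfloor n/2\rfloor+1}}$: $n=1$: $\mathcal{J}_1=\mathrm{Aut}(T_2)\cong\mathbb{Z}_2$, $\psi_1(g)=0$, $\Delta_1(g)=(g_f,0)$. $n=2$: $\mathcal{J}_2=\{g\in\mathrm{Aut}(T_3): g_L=g_R\}$, $\psi_2(g)=\delta(g_{Lf}=1)\in\mathbb{Z}_2$, $\Delta_2(g)=(g_f,\psi_2(g))$. $n\ge3$: $\mathcal{J}_n=\{g\in\mathrm{Aut}(T_{n+1}): g_L,g_R\in\mathcal{J}_{n-1},\ \Delta_{n-1}(g_L)=\Phi(\Delta_{n-1}(g_R))\}$; $\psi_n(g)=\dfrac{\psi_{n-1}(g_L)+\psi_{n-1}(g_R)}{p+q}$ for odd $n$, and $\psi_n(g)=\dfrac{2(\psi_{n-2}(g_{LL})+\psi_{n-2}(g_{RL}))-\delta(g_{Lf}=1)(p+q)(p-q)}{(p+q)^2}$ for even $n$ (here $2\psi_{n-2}(\cdot)$, with $\psi_{n-2}\in\mathbb{Z}_{2^{n/2-1}}$, is read in $\mathbb{Z}_{2^{n/2}}$); $\Delta_n(g)=(g_f,\ \psi_{n-1}(g_L)-\psi_{n-1}(g_R))$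 for odd $n$, and $\Delta_n(g)=(g_f,\ (p+q)\psi_n(g)-2\psi_{n-1}(g_R))$ for even $n$. *)

theory Defs
  imports "HOL-Algebra.Algebra"
begin

text \<open>An element of Aut(T_{d+1}) is a complete binary tree of depth d whose internal
  nodes carry the bit g_f (Lf is the unique element of the trivial group Aut(T_1)).\<close>

datatype tree = Lf | Nd bool tree tree

fun tf :: "tree \<Rightarrow> bool" where
  "tf (Nd f l r) = f" | "tf Lf = False"
fun tL :: "tree \<Rightarrow> tree" where
  "tL (Nd f l r) = l" | "tL Lf = Lf"
fun tR :: "tree \<Rightarrow> tree" where
  "tR (Nd f l r) = r" | "tR Lf = Lf"

fun wf_tree :: "nat \<Rightarrow> tree \<Rightarrow> bool" where
  "wf_tree 0 t = (t = Lf)"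
| "wf_tree (Suc d) Lf = False"
| "wf_tree (Suc d) (Nd f l r) = (wf_tree d l \<and> wf_tree d r)"

fun tmul :: "tree \<Rightarrow> tree \<Rightarrow> tree" where
  "tmul (Nd f a b) (Nd g c d) =
     (if f then Nd (f \<noteq> g) (tmul a d) (tmul b c) else Nd (f \<noteq> g) (tmul a c) (tmul b d))"
| "tmul _ _ = Lf"

fun tone :: "nat \<Rightarrow> tree" where
  "tone 0 = Lf" | "tone (Suc d) = Nd False (tone d) (tone d)"

definition autT :: "nat \<Rightarrow> tree monoid" where
  "autT k = \<lparr>carrier = {t. wf_tree (k - 1) t}, monoid.mult = tmul, one = tone (k - 1)\<rparr>"

text \<open>Z_{2^k} is the library group integer_mod_group (2^k) (carrier {0..<2^k}).
  Division by an odd d in Z_{2^k}: the unique residue x with d*x = a mod 2^k.\<close>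
definition zdiv :: "nat \<Rightarrow> int \<Rightarrow> int \<Rightarrow> int" where
  "zdiv k a d = (THE x. x \<in> {0..<2^k} \<and> (d * x) mod 2^k = a mod 2^k)"

text \<open>D_{2m}: pairs (f,x), f \<in> Z_2 (as bool), x \<in> Z_m (as {0..<m}),
  (f1,x1)(f2,x2) = (f1+f2, x1 + (-1)^f1 x2).\<close>
definition dihedral :: "nat \<Rightarrow> (bool \<times> int) monoid" where
  "dihedral m = \<lparr>carrier = UNIV \<times> {0..<int m},
     monoid.mult = (\<lambda>(f1, x1) (f2, x2). (f1 \<noteq> f2, (x1 + (if f1 then - x2 else x2)) mod int m)),
     one = (False, 0)\<rparr>"

definition Phi :: "int \<Rightarrow> int \<Rightarrow> nat \<Rightarrow> bool \<times> int \<Rightarrow> bool \<times> int" where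
  "Phi p q m d = (fst d, ((if fst d then (p + q) * (p - q) else 0) - snd d) mod int m)"

function psi :: "int \<Rightarrow> int \<Rightarrow> nat \<Rightarrow> tree \<Rightarrow> int" where
  "psi p q n g =
    (if n \<le> 1 then 0
     else if n = 2 then (if tf (tL g) then 1 else 0)
     else if odd n then
       zdiv (n div 2) (psi p q (n - 1) (tL g) + psi p q (n - 1) (tR g)) (p + q)
     else
       zdiv (n div 2)
         (2 * (psi p q (n - 2) (tL (tL g)) + psi p q (n - 2) (tL (tR g)))
            - (if tf (tL g) then (p + q) * (p - q) else 0))
         ((p + q)^2))"
  by pat_completeness auto
termination by (relation "measure (\<lambda>(p, q, n, g). n)") auto

definition Delta :: "int \<Rightarrow> int \<Rightarrow> nat \<Rightarrow> tree \<Rightarrow> bool \<times> int" where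
  "Delta p q n g =
    (if n = 1 then (tf g, 0)
     else if n = 2 then (tf g, psi p q 2 g)
     else if odd n then (tf g, (psi p q (n - 1) (tL g) - psi p q (n - 1) (tR g)) mod 2^(n div 2))
     else (tf g, ((p + q) * psi p q n g - 2 * psi p q (n - 1) (tR g)) mod 2^(n div 2)))"

fun J :: "int \<Rightarrow> int \<Rightarrow> nat \<Rightarrow> tree set" where
  "J p q 0 = {}"
| "J p q (Suc 0) = carrier (autT 2)"
| "J p q (Suc (Suc 0)) = {g \<in> carrier (autT 3). tL g = tR g}"
| "J p q (Suc (Suc (Suc m))) =
     {g \<in> carrier (autT (m + 4)). tL g \<in> J p q (m + 2) \<and> tR g \<in> J p q (m + 2) \<and>
        Delta p q (m + 2) (tL g) = Phi p q (2 ^ ((m + 2) div 2)) (Delta p q (m + 2) (tR g))}"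

end

theory Submission
  imports Defs "HOL-Number_Theory.Cong"
begin

(* The three claims are proved together, by induction on n.

   Aut(T_(n+2)) is the wreath product of Aut(T_(n+1)) with Z_2, and J_(n+1) consists of the g
   whose halves satisfy Delta_n(g_L) = Phi(Delta_n(g_R)).  As Delta_n is a homomorphism and Phi
   is an involutive automorphism of the dihedral group, this relation survives products and
   inverses, so J_(n+1) is a subgroup.

   The maps are handled by congruences modulo powers of two.  If sigma is additive on J_n, then
   g |-> sigma(g_L) + sigma(g_R) is additive on J_(n+1) and g |-> (g_f, sigma(g_L) - sigma(g_R))
   is a homomorphism to the dihedral group; dividing by the odd number p+q settles odd levels.
   At an even level n the numerator 2(psi(g_LL) + psi(g_RL)) - [g_Lf = 1](p+q)(p-q) is additive
   modulo 2^(n/2): doubling makes psi_(n-2) well defined modulo the larger power of two, and the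
   relation defining J_n pays for the flip bit of g_L.  The same relation yields
   (p+q) psi_n(g) = psi_(n-1)(g_L) + psi_(n-1)(g_R) modulo 2^(n/2-1), which is exactly what
   Delta_n needs in order to respect the flip at the root. *)

section \<open>The tree automorphism groups\<close>

fun tinv :: "tree \<Rightarrow> tree" where
  "tinv (Nd f a b) = (if f then Nd f (tinv b) (tinv a) else Nd f (tinv a) (tinv b))"
| "tinv Lf = Lf"

lemma wf_tree_SucE:
  assumes "wf_tree (Suc d) x"
  obtains f l r where "x = Nd f l r" "wf_tree d l" "wf_tree d r"
  using assms by (cases x) auto

lemma wf_tree_tmul: "wf_tree d x \<Longrightarrow> wf_tree d y \<Longrightarrow> wf_tree d (tmul x y)"
  by (induction d arbitrary: x y) (auto elim!: wf_tree_SucE)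

lemma wf_tree_tinv: "wf_tree d x \<Longrightarrow> wf_tree d (tinv x)"
  by (induction d arbitrary: x) (auto elim!: wf_tree_SucE)

lemma wf_tree_tone: "wf_tree d (tone d)"
  by (induction d) auto

lemma tmul_assoc:
  "wf_tree d x \<Longrightarrow> wf_tree d y \<Longrightarrow> wf_tree d z \<Longrightarrow> tmul (tmul x y) z = tmul x (tmul y z)"
  by (induction d arbitrary: x y z) (auto elim!: wf_tree_SucE)

lemma tmul_tone_left: "wf_tree d x \<Longrightarrow> tmul (tone d) x = x"
  by (induction d arbitrary: x) (auto elim!: wf_tree_SucE)

lemma tmul_tinv_left: "wf_tree d x \<Longrightarrow> tmul (tinv x) x = tone d"
  by (induction d arbitrary: x) (auto elim!: wf_tree_SucE)

lemma tf_tmul: "wf_tree (Suc d) x \<Longrightarrow> wf_tree (Suc d) y \<Longrightarrow> tf (tmul x y) = (tf x \<noteq> tf y)"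
  by (elim wf_tree_SucE) auto

lemma carrier_autT [simp]: "carrier (autT k) = {t. wf_tree (k - 1) t}"
  and mult_autT [simp]: "x \<otimes>\<^bsub>autT k\<^esub> y = tmul x y"
  and one_autT [simp]: "\<one>\<^bsub>autT k\<^esub> = tone (k - 1)"
  by (simp_all add: autT_def)

lemma group_autT: "group (autT k)"
  by (rule groupI) (auto simp: wf_tree_tmul wf_tree_tone tmul_assoc tmul_tone_left
      intro: wf_tree_tinv tmul_tinv_left)

lemma inv_autT: "wf_tree (k - 1) x \<Longrightarrow> inv\<^bsub>autT k\<^esub> x = tinv x"
  by (rule group.inv_equality[OF group_autT]) (simp_all add: wf_tree_tinv tmul_tinv_left)

section \<open>Dihedral and cyclic targets\<close>

lemma mult_dihedral [simp]:
  "(f, x) \<otimes>\<^bsub>dihedral m\<^esub> (g, y) = (f \<noteq> g, (x + (if f then - y else y)) mod int m)"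
  by (simp add: dihedral_def)

lemma carrier_dihedral [simp]: "carrier (dihedral m) = UNIV \<times> {0..<int m}"
  and one_dihedral [simp]: "\<one>\<^bsub>dihedral m\<^esub> = (False, 0)"
  by (simp_all add: dihedral_def)

lemma group_dihedral:
  assumes "0 < m"
  shows "group (dihedral m)"
proof (rule groupI)
  fix x y z assume "x \<in> carrier (dihedral m)" "y \<in> carrier (dihedral m)" "z \<in> carrier (dihedral m)"
  then show "x \<otimes>\<^bsub>dihedral m\<^esub> y \<otimes>\<^bsub>dihedral m\<^esub> z = x \<otimes>\<^bsub>dihedral m\<^esub> (y \<otimes>\<^bsub>dihedral m\<^esub> z)"
    by (cases x; cases y; cases z) (auto simp: mod_simps algebra_simps)
next
  fix x assume x: "x \<in> carrier (dihedral m)"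
  obtain f a where "x = (f, a)"
    by fastforce
  then have "(f, if f then a else - a mod int m) \<otimes>\<^bsub>dihedral m\<^esub> x = \<one>\<^bsub>dihedral m\<^esub>"
    by (simp add: mod_simps)
  moreover have "(f, if f then a else - a mod int m) \<in> carrier (dihedral m)"
    using x \<open>x = (f, a)\<close> assms by auto
  ultimately show "\<exists>y\<in>carrier (dihedral m). y \<otimes>\<^bsub>dihedral m\<^esub> x = \<one>\<^bsub>dihedral m\<^esub>"
    by blast
qed (use assms in \<open>auto simp: mod_simps\<close>)

lemma Phi_hom: "Phi p q m \<in> hom (dihedral m) (dihedral m)"
proof (rule homI)
  fix x y :: "bool \<times> int"
  show "Phi p q m (x \<otimes>\<^bsub>dihedral m\<^esub> y) = Phi p q m x \<otimes>\<^bsub>dihedral m\<^esub> Phi p q m y"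
    by (cases x; cases y; cases "fst x"; cases "fst y")
      (simp_all add: Phi_def; simp only: mod_simps; simp add: algebra_simps mod_simps)+
qed (auto simp: Phi_def)

lemma Phi_Phi: "a \<in> carrier (dihedral m) \<Longrightarrow> Phi p q m (Phi p q m a) = a"
  by (cases a) (auto simp: Phi_def mod_simps)

lemma hom_integer_mod_group_cong:
  "h \<in> hom G (integer_mod_group m) \<Longrightarrow> x \<in> carrier G \<Longrightarrow> y \<in> carrier G \<Longrightarrow>
    [h (x \<otimes>\<^bsub>G\<^esub> y) = h x + h y] (mod int m)"
  by (simp add: hom_mult)

lemma hom_integer_mod_groupI:
  assumes "monoid G"
    and range: "\<And>x. x \<in> carrier G \<Longrightarrow> h x \<in> {0..<int m}"
    and add: "\<And>x y. x \<in> carrier G \<Longrightarrow> y \<in> carrier G \<Longrightarrow>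
      [h (x \<otimes>\<^bsub>G\<^esub> y) = h x + h y] (mod int m)"
  shows "h \<in> hom G (integer_mod_group m)"
proof (rule homI)
  fix x y assume x: "x \<in> carrier G" and y: "y \<in> carrier G"
  have "h (x \<otimes>\<^bsub>G\<^esub> y) \<in> {0..<int m}"
    using range monoid.m_closed[OF assms(1) x y] by blast
  then show "h (x \<otimes>\<^bsub>G\<^esub> y) = h x \<otimes>\<^bsub>integer_mod_group m\<^esub> h y"
    using add[OF x y] by (simp add: cong_def)
qed (use range in \<open>auto simp: carrier_integer_mod_group\<close>)

lemma hom_dihedralI:
  assumes "monoid G" "0 < m"
    and sign: "\<And>x y. x \<in> carrier G \<Longrightarrow> y \<in> carrier G \<Longrightarrow> \<epsilon> (x \<otimes>\<^bsub>G\<^esub> y) = (\<epsilon> x \<noteq> \<epsilon> y)"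
    and twisted_add: "\<And>x y. x \<in> carrier G \<Longrightarrow> y \<in> carrier G \<Longrightarrow>
      [\<delta> (x \<otimes>\<^bsub>G\<^esub> y) = \<delta> x + (if \<epsilon> x then - \<delta> y else \<delta> y)] (mod int m)"
  shows "(\<lambda>x. (\<epsilon> x, \<delta> x mod int m)) \<in> hom G (dihedral m)"
proof (rule homI)
  fix x y assume x: "x \<in> carrier G" and y: "y \<in> carrier G"
  show "(\<epsilon> (x \<otimes>\<^bsub>G\<^esub> y), \<delta> (x \<otimes>\<^bsub>G\<^esub> y) mod int m) =
      (\<epsilon> x, \<delta> x mod int m) \<otimes>\<^bsub>dihedral m\<^esub> (\<epsilon> y, \<delta> y mod int m)"
    using sign[OF x y] twisted_add[OF x y] by (simp add: cong_def mod_simps)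
qed (simp add: \<open>0 < m\<close>)

section \<open>Division by odd numbers modulo powers of two\<close>

lemma odd_mult_cong_ex1:
  fixes d :: int
  assumes "odd d"
  shows "\<exists>!x. x \<in> {0..<2 ^ k} \<and> [d * x = a] (mod 2 ^ k)"
proof -
  have coprime: "coprime d (2 ^ k)"
    using assms by simp
  obtain i where i: "[d * i = 1] (mod 2 ^ k)"
    using cong_solve_coprime_int[OF coprime] by blast
  let ?y = "(i * a) mod 2 ^ k"
  have "?y \<in> {0..<2 ^ k} \<and> [d * ?y = a] (mod 2 ^ k)"
    using cong_scalar_right[OF i, of a] by (simp add: cong_def mod_simps mult.assoc)
  moreover have "x = ?y" if "x \<in> {0..<2 ^ k} \<and> [d * x = a] (mod 2 ^ k)" for x
  proof -
    have "[d * x = d * ?y] (mod 2 ^ k)"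
      using that calculation cong_sym cong_trans by blast
    then have "[x = ?y] (mod 2 ^ k)"
      using cong_mult_lcancel[OF coprime] by blast
    then show ?thesis
      using that by (simp add: cong_def)
  qed
  ultimately show ?thesis
    by blast
qed

lemma zdiv_in_range:
  fixes d :: int
  assumes "odd d"
  shows "zdiv k a d \<in> {0..<2 ^ k}"
  using theI'[OF odd_mult_cong_ex1[OF assms, unfolded cong_def]] unfolding zdiv_def by blast

lemma mult_zdiv_cong:
  fixes d :: int
  assumes "odd d"
  shows "[d * zdiv k a d = a] (mod 2 ^ k)"
  using theI'[OF odd_mult_cong_ex1[OF assms, unfolded cong_def]] unfolding zdiv_def cong_def by blast

lemma hom_zdiv:
  fixes d :: int
  assumes "monoid G" "odd d"
    and add: "\<And>x y. x \<in> carrier G \<Longrightarrow> y \<in> carrier G \<Longrightarrow> [N (x \<otimes>\<^bsub>G\<^esub> y) = N x + N y] (mod 2 ^ k)"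
  shows "(\<lambda>x. zdiv k (N x) d) \<in> hom G (integer_mod_group (2 ^ k))"
proof (rule hom_integer_mod_groupI[OF \<open>monoid G\<close>])
  fix x y assume x: "x \<in> carrier G" and y: "y \<in> carrier G"
  have "[d * zdiv k (N (x \<otimes>\<^bsub>G\<^esub> y)) d = N x + N y] (mod 2 ^ k)"
    using mult_zdiv_cong[OF \<open>odd d\<close>] add[OF x y] cong_trans by blast
  also have "[N x + N y = d * (zdiv k (N x) d + zdiv k (N y) d)] (mod 2 ^ k)"
    using cong_add[OF mult_zdiv_cong[OF \<open>odd d\<close>] mult_zdiv_cong[OF \<open>odd d\<close>]]
    by (simp add: cong_sym distrib_left)
  finally show "[zdiv k (N (x \<otimes>\<^bsub>G\<^esub> y)) d = zdiv k (N x) d + zdiv k (N y) d] (mod int (2 ^ k))"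
    using cong_mult_lcancel[of d "2 ^ k"] \<open>odd d\<close> by simp
qed (use zdiv_in_range[OF \<open>odd d\<close>] in simp)

section \<open>Wreath product lemmas\<close>

lemma subgroup_twisted_pairs:
  assumes H: "subgroup H (autT (Suc d))" and "group G"
    and h: "h \<in> hom ((autT (Suc d))\<lparr>carrier := H\<rparr>) G"
    and \<phi>: "\<phi> \<in> hom G G" and involution: "\<And>a. a \<in> carrier G \<Longrightarrow> \<phi> (\<phi> a) = a"
  shows "subgroup {Nd f A B |f A B. A \<in> H \<and> B \<in> H \<and> h A = \<phi> (h B)} (autT (Suc (Suc d)))"
    (is "subgroup ?J _")
proof -
  interpret T: group "autT (Suc d)"
    by (rule group_autT)
  interpret h: group_hom "(autT (Suc d))\<lparr>carrier := H\<rparr>" G h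
    using H h \<open>group G\<close> by (simp add: group_hom_def group_hom_axioms_def subgroup.subgroup_is_group)
  interpret \<phi>: group_hom G G \<phi>
    using \<phi> \<open>group G\<close> by (simp add: group_hom_def group_hom_axioms_def)
  have wf: "wf_tree d A" if "A \<in> H" for A
    using subgroup.subset[OF H] that by auto
  have h_mult: "h (tmul A B) = h A \<otimes>\<^bsub>G\<^esub> h B" if "A \<in> H" "B \<in> H" for A B
    using h.hom_mult that by simp
  have h_inv: "h (tinv A) = inv\<^bsub>G\<^esub> h A" if "A \<in> H" for A
    using h.hom_inv[of A] that H wf inv_autT[of "Suc d" A] by simp
  have tinv_closed: "tinv A \<in> H" if "A \<in> H" for A
    using subgroup.m_inv_closed[OF H that] inv_autT[of "Suc d" A] wf[OF that] by simp
  \<comment> \<open>A root flip swaps the halves; as \<open>\<phi>\<close> is an involution, the relation reads both ways.\<close>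
  have swap: "h B = \<phi> (h A)" if "h A = \<phi> (h B)" "B \<in> H" for A B
    using that involution by simp
  show ?thesis
  proof (rule group.subgroupI[OF group_autT])
    show "?J \<subseteq> carrier (autT (Suc (Suc d)))"
      using wf by auto
    have "tone (Suc d) \<in> ?J"
      using h.hom_one \<phi>.hom_one subgroup.one_closed[OF H] by auto
    then show "?J \<noteq> {}"
      by blast
  next
    fix x assume "x \<in> ?J"
    then obtain f A B where x: "x = Nd f A B" "A \<in> H" "B \<in> H" "h A = \<phi> (h B)"
      by blast
    have "h (tinv A) = \<phi> (h (tinv B))" "h (tinv B) = \<phi> (h (tinv A))"
      using x swap[of A B] by (simp_all add: h_inv)
    then show "inv\<^bsub>autT (Suc (Suc d))\<^esub> x \<in> ?J"
      using x wf by (subst inv_autT) (auto simp: tinv_closed)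
  next
    fix x y assume "x \<in> ?J" "y \<in> ?J"
    then obtain f A B g C D where x: "x = Nd f A B" "A \<in> H" "B \<in> H" "h A = \<phi> (h B)"
      and y: "y = Nd g C D" "C \<in> H" "D \<in> H" "h C = \<phi> (h D)"
      by blast
    have "h (tmul A C) = \<phi> (h (tmul B D))" "h (tmul A D) = \<phi> (h (tmul B C))"
      using x y swap[of C D] by (simp_all add: h_mult)
    then show "x \<otimes>\<^bsub>autT (Suc (Suc d))\<^esub> y \<in> ?J"
      using x y subgroup.m_closed[OF H] by auto
  qed
qed

lemma children_sum_cong:
  fixes \<sigma> :: "tree \<Rightarrow> int"
  assumes add: "\<And>U V. U \<in> H \<Longrightarrow> V \<in> H \<Longrightarrow> [\<sigma> (tmul U V) = \<sigma> U + \<sigma> V] (mod m)"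
    and "A \<in> H" "B \<in> H" "C \<in> H" "D \<in> H"
  shows "[\<sigma> (tL (tmul (Nd f A B) (Nd g C D))) + \<sigma> (tR (tmul (Nd f A B) (Nd g C D)))
    = (\<sigma> A + \<sigma> B) + (\<sigma> C + \<sigma> D)] (mod m)"
proof (cases f)
  case True
  then show ?thesis
    using cong_add[OF add[of A D] add[of B C]] assms by (simp add: ac_simps)
next
  case False
  then show ?thesis
    using cong_add[OF add[of A C] add[of B D]] assms by (simp add: ac_simps)
qed

lemma children_diff_cong:
  fixes \<sigma> :: "tree \<Rightarrow> int"
  assumes add: "\<And>U V. U \<in> H \<Longrightarrow> V \<in> H \<Longrightarrow> [\<sigma> (tmul U V) = \<sigma> U + \<sigma> V] (mod m)"
    and "A \<in> H" "B \<in> H" "C \<in> H" "D \<in> H"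
  shows "[\<sigma> (tL (tmul (Nd f A B) (Nd g C D))) - \<sigma> (tR (tmul (Nd f A B) (Nd g C D)))
    = (\<sigma> A - \<sigma> B) + (if f then - (\<sigma> C - \<sigma> D) else \<sigma> C - \<sigma> D)] (mod m)"
proof (cases f)
  case True
  then show ?thesis
    using cong_diff[OF add[of A D] add[of B C]] assms by (simp add: algebra_simps)
next
  case False
  then show ?thesis
    using cong_diff[OF add[of A C] add[of B D]] assms by (simp add: algebra_simps)
qed

lemma left_grandchildren_sum_cong:
  fixes \<sigma> :: "tree \<Rightarrow> int" and f a g c c' :: bool
  assumes add: "\<And>U V. U \<in> H \<Longrightarrow> V \<in> H \<Longrightarrow> [\<sigma> (tmul U V) = \<sigma> U + \<sigma> V] (mod m)"
    and "A1 \<in> H" "A2 \<in> H" "B1 \<in> H" "B2 \<in> H" "C1 \<in> H" "C2 \<in> H" "D1 \<in> H" "D2 \<in> H"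
  defines "xy \<equiv> tmul (Nd f (Nd a A1 A2) (Nd a B1 B2)) (Nd g (Nd c C1 C2) (Nd c' D1 D2))"
  shows "[\<sigma> (tL (tL xy)) + \<sigma> (tL (tR xy))
    = (\<sigma> A1 + \<sigma> B1) + (if a then \<sigma> C2 + \<sigma> D2 else \<sigma> C1 + \<sigma> D1)] (mod m)"
proof -
  obtain U V where lr: "tL (tL xy) = tmul A1 U" "tL (tR xy) = tmul B1 V" and "U \<in> H" "V \<in> H"
    and UV: "\<sigma> U + \<sigma> V = (if a then \<sigma> C2 + \<sigma> D2 else \<sigma> C1 + \<sigma> D1)"
    using assms(2-) unfolding xy_def by (cases f; cases a) (auto simp: ac_simps)
  show ?thesis
    using cong_add[OF add[of A1 U] add[of B1 V]] assms(2-) \<open>U \<in> H\<close> \<open>V \<in> H\<close>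
    unfolding lr UV[symmetric] by (simp add: ac_simps)
qed

declare psi.simps [simp del]

definition psi_numerator :: "int \<Rightarrow> int \<Rightarrow> nat \<Rightarrow> tree \<Rightarrow> int" where
  "psi_numerator p q e g = 2 * (psi p q e (tL (tL g)) + psi p q e (tL (tR g)))
     - (if tf (tL g) then (p + q) * (p - q) else 0)"

lemma psi_le_1: "n \<le> 1 \<Longrightarrow> psi p q n g = 0"
  by (simp add: psi.simps)

lemma psi_2: "psi p q 2 g = (if tf (tL g) then 1 else 0)"
  by (simp add: psi.simps)

lemma psi_odd:
  "3 \<le> n \<Longrightarrow> odd n \<Longrightarrow>
    psi p q n g = zdiv (n div 2) (psi p q (n - 1) (tL g) + psi p q (n - 1) (tR g)) (p + q)"
  by (subst psi.simps) simp

lemma psi_even: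
  "4 \<le> n \<Longrightarrow> even n \<Longrightarrow>
    psi p q n g = zdiv (n div 2) (psi_numerator p q (n - 2) g) ((p + q) ^ 2)"
  by (subst psi.simps) (auto simp: psi_numerator_def)

lemma Delta_odd:
  "3 \<le> n \<Longrightarrow> odd n \<Longrightarrow>
    Delta p q n = (\<lambda>g. (tf g, (psi p q (n - 1) (tL g) - psi p q (n - 1) (tR g)) mod 2 ^ (n div 2)))"
  by (simp add: Delta_def fun_eq_iff)

lemma Delta_even:
  "4 \<le> n \<Longrightarrow> even n \<Longrightarrow>
    Delta p q n = (\<lambda>g. (tf g, ((p + q) * psi p q n g - 2 * psi p q (n - 1) (tR g)) mod 2 ^ (n div 2)))"
  by (auto simp add: Delta_def fun_eq_iff)

lemma J_subset_carrier: "J p q n \<subseteq> carrier (autT (n + 1))"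
  by (induction p q n rule: J.induct) (auto simp: numeral_eq_Suc)

lemma J_2: "J p q 2 = {Nd f A B |f A B. A \<in> carrier (autT 2) \<and> B \<in> carrier (autT 2) \<and> A = B}"
  by (auto simp: numeral_eq_Suc elim!: wf_tree_SucE)

lemma J_Suc:
  assumes "2 \<le> d"
  shows "J p q (Suc d) = {Nd f A B |f A B. A \<in> J p q d \<and> B \<in> J p q d \<and>
    Delta p q d A = Phi p q (2 ^ (d div 2)) (Delta p q d B)}"
proof -
  obtain m where d: "d = Suc (Suc m)"
    using assms by (metis add_2_eq_Suc le_Suc_ex)
  show ?thesis
    using J_subset_carrier[of p q d] by (auto simp: d numeral_eq_Suc elim!: wf_tree_SucE)
qed

abbreviation J_group :: "int \<Rightarrow> int \<Rightarrow> nat \<Rightarrow> tree monoid" where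
  "J_group p q n \<equiv> (autT (n + 1))\<lparr>carrier := J p q n\<rparr>"

lemma monoid_J_group: "subgroup (J p q n) (autT (n + 1)) \<Longrightarrow> monoid (J_group p q n)"
  using subgroup.subgroup_is_group[OF _ group_autT] group.is_monoid by blast

lemma hom_J_group_cong:
  "h \<in> hom (J_group p q n) (integer_mod_group (2 ^ k)) \<Longrightarrow> U \<in> J p q n \<Longrightarrow> V \<in> J p q n \<Longrightarrow>
    [h (tmul U V) = h U + h V] (mod 2 ^ k)"
  using hom_integer_mod_group_cong[of h "J_group p q n" "2 ^ k" U V] by simp

lemma J_SucE:
  assumes "x \<in> J p q (Suc d)" "2 \<le> d"
  obtains f A B where "x = Nd f A B" "A \<in> J p q d" "B \<in> J p q d"
    "Delta p q d A = Phi p q (2 ^ (d div 2)) (Delta p q d B)"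
  using assms J_Suc by blast

lemma J_Suc_pairE:
  assumes "x \<in> J p q (Suc d)" "y \<in> J p q (Suc d)" "2 \<le> d"
  obtains f A B g C D where "x = Nd f A B" "y = Nd g C D"
    "A \<in> J p q d" "B \<in> J p q d" "C \<in> J p q d" "D \<in> J p q d"
  using J_SucE[OF assms(1,3)] J_SucE[OF assms(2,3)] by metis

lemma J_Suc_SucE:
  assumes "x \<in> J p q (Suc (Suc e))" "even e" "2 \<le> e"
  obtains f a A1 A2 B1 B2 where "x = Nd f (Nd a A1 A2) (Nd a B1 B2)"
    "Nd a A1 A2 \<in> J p q (Suc e)" "Nd a B1 B2 \<in> J p q (Suc e)"
    "A1 \<in> J p q e" "A2 \<in> J p q e" "B1 \<in> J p q e" "B2 \<in> J p q e"
    "[psi p q e A1 - psi p q e A2 + (psi p q e B1 - psi p q e B2)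
      = (if a then (p + q) * (p - q) else 0)] (mod 2 ^ (e div 2))"
proof -
  let ?\<sigma> = "psi p q e" and ?K = "(2::int) ^ (e div 2)"
  have odd_level: "Suc e div 2 = e div 2" "3 \<le> Suc e" "odd (Suc e)"
    using assms(2,3) by auto
  obtain f A B where x: "x = Nd f A B" "A \<in> J p q (Suc e)" "B \<in> J p q (Suc e)"
    and twisted: "Delta p q (Suc e) A = Phi p q (2 ^ (e div 2)) (Delta p q (Suc e) B)"
    using J_SucE[OF assms(1)] assms(3) odd_level(1) by auto
  obtain a A1 A2 where A: "A = Nd a A1 A2" "A1 \<in> J p q e" "A2 \<in> J p q e"
    using J_SucE[OF x(2) assms(3)] by blast
  obtain b B1 B2 where B: "B = Nd b B1 B2" "B1 \<in> J p q e" "B2 \<in> J p q e"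
    using J_SucE[OF x(3) assms(3)] by blast
  have "Delta p q (Suc e) A = (a, (?\<sigma> A1 - ?\<sigma> A2) mod ?K)"
    "Delta p q (Suc e) B = (b, (?\<sigma> B1 - ?\<sigma> B2) mod ?K)"
    using odd_level by (simp_all add: A B Delta_odd)
  then have "a = b" and "[?\<sigma> A1 - ?\<sigma> A2
      = (if a then (p + q) * (p - q) else 0) - (?\<sigma> B1 - ?\<sigma> B2)] (mod ?K)"
    using twisted by (auto simp: Phi_def cong_def mod_diff_right_eq)
  then have "[?\<sigma> A1 - ?\<sigma> A2 + (?\<sigma> B1 - ?\<sigma> B2) = (if a then (p + q) * (p - q) else 0)] (mod ?K)"
    using cong_add[of _ _ ?K "?\<sigma> B1 - ?\<sigma> B2" "?\<sigma> B1 - ?\<sigma> B2"] by fastforce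
  then show thesis
    using that x A B \<open>a = b\<close> by blast
qed

definition level_homs :: "int \<Rightarrow> int \<Rightarrow> nat \<Rightarrow> bool" where
  "level_homs p q n \<longleftrightarrow> subgroup (J p q n) (autT (n + 1)) \<and>
     psi p q n \<in> hom (J_group p q n) (integer_mod_group (2 ^ (n div 2))) \<and>
     Delta p q n \<in> hom (J_group p q n) (dihedral (2 ^ (n div 2)))"

lemma level_homs_1: "level_homs p q 1"
proof -
  have sub: "subgroup (J p q 1) (autT (1 + 1))"
    using group.subgroup_self[OF group_autT, of 2] by (simp add: numeral_eq_Suc)
  have psi_eq: "psi p q 1 = (\<lambda>x. 0)"
    by (simp add: psi_le_1 fun_eq_iff)
  have Delta_eq: "Delta p q 1 = (\<lambda>x. (tf x, 0 mod int (2 ^ (1 div 2))))"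
    by (simp add: Delta_def fun_eq_iff)
  have "psi p q 1 \<in> hom (J_group p q 1) (integer_mod_group (2 ^ (1 div 2)))"
    unfolding psi_eq by (rule hom_integer_mod_groupI[OF monoid_J_group[OF sub]]) simp_all
  moreover have "Delta p q 1 \<in> hom (J_group p q 1) (dihedral (2 ^ (1 div 2)))"
    unfolding Delta_eq by (rule hom_dihedralI[OF monoid_J_group[OF sub]]) (auto simp: tf_tmul)
  ultimately show ?thesis
    unfolding level_homs_def using sub by simp
qed

lemma level_homs_2: "level_homs p q 2"
proof -
  have J2: "J p q 2 = {Nd f (Nd a Lf Lf) (Nd a Lf Lf) |f a. True}"
    by (auto simp: J_2 numeral_eq_Suc elim!: wf_tree_SucE)
  have sub: "subgroup (J p q 2) (autT (2 + 1))"
  proof -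
    have "subgroup {Nd f A B |f A B. A \<in> carrier (autT (Suc 1)) \<and> B \<in> carrier (autT (Suc 1)) \<and> A = B}
        (autT (Suc (Suc 1)))"
      by (rule subgroup_twisted_pairs[where G = "autT (Suc 1)" and h = "\<lambda>x. x" and \<phi> = "\<lambda>x. x"],
          rule group.subgroup_self[OF group_autT]) (simp_all add: hom_def group_autT)
    then show ?thesis
      unfolding J_2 by (simp add: numeral_eq_Suc)
  qed
  define \<delta> where "\<delta> x = (if tf (tL x) then 1 else 0 :: int)" for x
  have sign: "tf (tmul x y) = (tf x \<noteq> tf y)"
    and add: "[\<delta> (tmul x y) = \<delta> x + \<delta> y] (mod 2)"
    and twisted_add: "[\<delta> (tmul x y) = \<delta> x + (if tf x then - \<delta> y else \<delta> y)] (mod 2)"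
    if "x \<in> J p q 2" "y \<in> J p q 2" for x y
    using that unfolding J2 \<delta>_def by (auto simp: cong_def)
  have psi_eq: "psi p q 2 = \<delta>"
    by (simp add: psi_2 \<delta>_def fun_eq_iff)
  have Delta_eq: "Delta p q 2 = (\<lambda>x. (tf x, \<delta> x mod int (2 ^ (2 div 2))))"
    by (simp add: Delta_def psi_2 \<delta>_def fun_eq_iff)
  have "psi p q 2 \<in> hom (J_group p q 2) (integer_mod_group (2 ^ (2 div 2)))"
    unfolding psi_eq
    by (rule hom_integer_mod_groupI[OF monoid_J_group[OF sub]]) (simp add: \<delta>_def, simp add: add)
  moreover have "Delta p q 2 \<in> hom (J_group p q 2) (dihedral (2 ^ (2 div 2)))"
    unfolding Delta_eq by (rule hom_dihedralI[OF monoid_J_group[OF sub]]) (simp_all add: sign twisted_add)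
  ultimately show ?thesis
    unfolding level_homs_def using sub by simp
qed

lemma subgroup_J_Suc:
  assumes "2 \<le> d" and "subgroup (J p q d) (autT (d + 1))"
    and "Delta p q d \<in> hom (J_group p q d) (dihedral (2 ^ (d div 2)))"
  shows "subgroup (J p q (Suc d)) (autT (Suc d + 1))"
proof -
  have "subgroup {Nd f A B |f A B. A \<in> J p q d \<and> B \<in> J p q d \<and>
      Delta p q d A = Phi p q (2 ^ (d div 2)) (Delta p q d B)} (autT (Suc (Suc d)))"
    by (rule subgroup_twisted_pairs[OF _ _ _ Phi_hom Phi_Phi]) (use assms in \<open>simp_all add: group_dihedral\<close>)
  then show ?thesis
    using J_Suc[OF \<open>2 \<le> d\<close>] by simp
qed

lemma Delta_hom_odd:
  assumes "even e" "2 \<le> e"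
    and J: "subgroup (J p q (Suc e)) (autT (Suc e + 1))"
    and \<sigma>: "psi p q e \<in> hom (J_group p q e) (integer_mod_group (2 ^ (e div 2)))"
  shows "Delta p q (Suc e) \<in> hom (J_group p q (Suc e)) (dihedral (2 ^ (Suc e div 2)))"
proof -
  let ?\<sigma> = "psi p q e"
  have level: "Suc e div 2 = e div 2"
    using \<open>even e\<close> by simp
  have Delta_eq: "Delta p q (Suc e) = (\<lambda>x. (tf x, (?\<sigma> (tL x) - ?\<sigma> (tR x)) mod int (2 ^ (e div 2))))"
    using assms(1,2) by (simp add: Delta_odd)
  have "tf (tmul x y) = (tf x \<noteq> tf y) \<and>
    [?\<sigma> (tL (tmul x y)) - ?\<sigma> (tR (tmul x y)) = (?\<sigma> (tL x) - ?\<sigma> (tR x))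
      + (if tf x then - (?\<sigma> (tL y) - ?\<sigma> (tR y)) else ?\<sigma> (tL y) - ?\<sigma> (tR y))] (mod 2 ^ (e div 2))"
    if x: "x \<in> J p q (Suc e)" and y: "y \<in> J p q (Suc e)" for x y
  proof -
    obtain f A B g C D where xy: "x = Nd f A B" "y = Nd g C D"
      and children: "A \<in> J p q e" "B \<in> J p q e" "C \<in> J p q e" "D \<in> J p q e"
      using J_Suc_pairE[OF x y \<open>2 \<le> e\<close>] by metis
    then show ?thesis
      using children_diff_cong[where H = "J p q e" and \<sigma> = ?\<sigma> and f = f and g = g, OF hom_J_group_cong[OF \<sigma>] children]
      by (cases f) simp_all
  qed
  then show ?thesis
    unfolding Delta_eq level power_Suc by (intro hom_dihedralI[OF monoid_J_group[OF J]]) simp_all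
qed

lemma psi_numerator_add:
  assumes "even e" "2 \<le> e"
    and \<sigma>: "psi p q e \<in> hom (J_group p q e) (integer_mod_group (2 ^ (e div 2)))"
    and x: "x \<in> J p q (Suc (Suc e))" and y: "y \<in> J p q (Suc (Suc e))"
  shows "[psi_numerator p q e (tmul x y) = psi_numerator p q e x + psi_numerator p q e y]
    (mod 2 * 2 ^ (e div 2))"
proof -
  let ?\<sigma> = "psi p q e" and ?K = "(2::int) ^ (e div 2)" and ?c = "(p + q) * (p - q)"
  let ?L = "?\<sigma> (tL (tL (tmul x y))) + ?\<sigma> (tL (tR (tmul x y)))"
  obtain f a A1 A2 B1 B2 where x: "x = Nd f (Nd a A1 A2) (Nd a B1 B2)"
    "A1 \<in> J p q e" "A2 \<in> J p q e" "B1 \<in> J p q e" "B2 \<in> J p q e"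
    using J_Suc_SucE[OF x assms(1,2)] by metis
  obtain g c C1 C2 D1 D2 where y: "y = Nd g (Nd c C1 C2) (Nd c D1 D2)"
    "C1 \<in> J p q e" "C2 \<in> J p q e" "D1 \<in> J p q e" "D2 \<in> J p q e"
    and y_twist: "[?\<sigma> C1 - ?\<sigma> C2 + (?\<sigma> D1 - ?\<sigma> D2) = (if c then ?c else 0)] (mod ?K)"
    using J_Suc_SucE[OF y assms(1,2)] by metis
  define t where "t = (if a then ?\<sigma> C2 + ?\<sigma> D2 else ?\<sigma> C1 + ?\<sigma> D1)"
  have "[?L = ?\<sigma> A1 + ?\<sigma> B1 + t] (mod ?K)"
    unfolding x(1) y(1) t_def
    by (rule left_grandchildren_sum_cong[where H = "J p q e" and \<sigma> = ?\<sigma>, OF hom_J_group_cong[OF \<sigma>]]) (use x y in simp_all)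
  then have "2 * ?K dvd 2 * ?L - 2 * (?\<sigma> A1 + ?\<sigma> B1 + t)"
    using cong_cmult_leftI cong_iff_dvd_diff by blast
  moreover have "2 * ?K dvd 2 * (?\<sigma> C1 - ?\<sigma> C2 + (?\<sigma> D1 - ?\<sigma> D2)) - 2 * (if c then ?c else 0)"
    using cong_cmult_leftI[OF y_twist] cong_iff_dvd_diff by blast
  moreover have "psi_numerator p q e (tmul x y) - (psi_numerator p q e x + psi_numerator p q e y)
      = (2 * ?L - 2 * (?\<sigma> A1 + ?\<sigma> B1 + t))
        - (if a then 2 * (?\<sigma> C1 - ?\<sigma> C2 + (?\<sigma> D1 - ?\<sigma> D2)) - 2 * (if c then ?c else 0) else 0)"
  proof -
    have "tf (tL (tmul x y)) = (a \<noteq> c)"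
      using x(1) y(1) by simp
    then show ?thesis
      unfolding psi_numerator_def t_def by (cases a; cases c) (simp_all add: x(1) y(1) algebra_simps)
  qed
  ultimately show ?thesis
    by (simp add: cong_iff_dvd_diff)
qed

context
  fixes p q :: int
  assumes odd_pq: "odd (p + q)"
begin

lemma psi_hom_odd:
  assumes "even e" "2 \<le> e"
    and J: "subgroup (J p q (Suc e)) (autT (Suc e + 1))"
    and \<sigma>: "psi p q e \<in> hom (J_group p q e) (integer_mod_group (2 ^ (e div 2)))"
  shows "psi p q (Suc e) \<in> hom (J_group p q (Suc e)) (integer_mod_group (2 ^ (Suc e div 2)))"
proof -
  let ?\<sigma> = "psi p q e"
  have level: "Suc e div 2 = e div 2"
    using \<open>even e\<close> by simp
  have psi_eq: "psi p q (Suc e) = (\<lambda>x. zdiv (e div 2) (?\<sigma> (tL x) + ?\<sigma> (tR x)) (p + q))"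
    using assms(1,2) by (simp add: psi_odd fun_eq_iff)
  have "[?\<sigma> (tL (tmul x y)) + ?\<sigma> (tR (tmul x y))
      = (?\<sigma> (tL x) + ?\<sigma> (tR x)) + (?\<sigma> (tL y) + ?\<sigma> (tR y))] (mod 2 ^ (e div 2))"
    if x: "x \<in> J p q (Suc e)" and y: "y \<in> J p q (Suc e)" for x y
  proof -
    obtain f A B g C D where xy: "x = Nd f A B" "y = Nd g C D"
      and children: "A \<in> J p q e" "B \<in> J p q e" "C \<in> J p q e" "D \<in> J p q e"
      using J_Suc_pairE[OF x y \<open>2 \<le> e\<close>] by metis
    then show ?thesis
      using children_sum_cong[where H = "J p q e" and \<sigma> = ?\<sigma> and f = f and g = g, OF hom_J_group_cong[OF \<sigma>] children]
      by (cases f) simp_all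
  qed
  then show ?thesis
    unfolding psi_eq level by (intro hom_zdiv[OF monoid_J_group[OF J] odd_pq]) simp_all
qed

lemma psi_hom_even:
  assumes "even e" "2 \<le> e"
    and J: "subgroup (J p q (Suc (Suc e))) (autT (Suc (Suc e) + 1))"
    and \<sigma>: "psi p q e \<in> hom (J_group p q e) (integer_mod_group (2 ^ (e div 2)))"
  shows "psi p q (Suc (Suc e)) \<in>
    hom (J_group p q (Suc (Suc e))) (integer_mod_group (2 ^ (Suc (Suc e) div 2)))"
proof -
  have psi_eq: "psi p q (Suc (Suc e)) = (\<lambda>x. zdiv (Suc (e div 2)) (psi_numerator p q e x) ((p + q) ^ 2))"
    using assms(1,2) by (simp add: psi_even fun_eq_iff)
  have level: "Suc (Suc e) div 2 = Suc (e div 2)"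
    by simp
  show ?thesis
    unfolding psi_eq level using odd_pq psi_numerator_add[OF assms(1,2) \<sigma>]
    by (intro hom_zdiv[OF monoid_J_group[OF J]]) simp_all
qed

lemma psi_even_children_cong:
  assumes "even e" "2 \<le> e" "x \<in> J p q (Suc (Suc e))"
  shows "[(p + q) * psi p q (Suc (Suc e)) x = psi p q (Suc e) (tL x) + psi p q (Suc e) (tR x)]
    (mod 2 ^ (e div 2))"
proof -
  let ?\<sigma> = "psi p q e" and ?\<tau> = "psi p q (Suc e)" and ?K = "(2::int) ^ (e div 2)" and ?s = "p + q"
  obtain f a A1 A2 B1 B2 where x: "x = Nd f (Nd a A1 A2) (Nd a B1 B2)"
    and twist: "[?\<sigma> A1 - ?\<sigma> A2 + (?\<sigma> B1 - ?\<sigma> B2) = (if a then ?s * (p - q) else 0)] (mod ?K)"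
    using J_Suc_SucE[OF assms(3,1,2)] by metis
  have "[?s ^ 2 * psi p q (Suc (Suc e)) x = psi_numerator p q e x] (mod 2 * ?K)"
    using mult_zdiv_cong[of "?s ^ 2" "Suc (e div 2)"] odd_pq assms(1,2) by (simp add: psi_even)
  then have "[?s * (?s * psi p q (Suc (Suc e)) x) = psi_numerator p q e x] (mod ?K)"
    by (simp add: power2_eq_square mult.assoc cong_modulus_mult[of _ _ ?K 2] mult.commute[of 2])
  also have "[psi_numerator p q e x = (?\<sigma> A1 + ?\<sigma> A2) + (?\<sigma> B1 + ?\<sigma> B2)] (mod ?K)"
  proof -
    have "psi_numerator p q e x - ((?\<sigma> A1 + ?\<sigma> A2) + (?\<sigma> B1 + ?\<sigma> B2))
        = (?\<sigma> A1 - ?\<sigma> A2 + (?\<sigma> B1 - ?\<sigma> B2)) - (if a then ?s * (p - q) else 0)"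
      by (simp add: psi_numerator_def x)
    then show ?thesis
      using twist by (simp only: cong_iff_dvd_diff)
  qed
  also have "[(?\<sigma> A1 + ?\<sigma> A2) + (?\<sigma> B1 + ?\<sigma> B2) = ?s * (?\<tau> (tL x) + ?\<tau> (tR x))] (mod ?K)"
  proof -
    have "[?s * ?\<tau> (Nd b U V) = ?\<sigma> U + ?\<sigma> V] (mod ?K)" for b U V
      using mult_zdiv_cong[of ?s "e div 2"] odd_pq assms(1,2) by (simp add: psi_odd)
    then show ?thesis
      unfolding x distrib_left by (intro cong_add) (simp_all add: cong_sym)
  qed
  finally show ?thesis
    using cong_mult_lcancel[of ?s ?K] odd_pq by simp
qed

lemma Delta_hom_even:
  assumes "even e" "2 \<le> e"
    and J: "subgroup (J p q (Suc (Suc e))) (autT (Suc (Suc e) + 1))"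
    and \<tau>: "psi p q (Suc e) \<in> hom (J_group p q (Suc e)) (integer_mod_group (2 ^ (Suc e div 2)))"
    and \<psi>: "psi p q (Suc (Suc e)) \<in>
      hom (J_group p q (Suc (Suc e))) (integer_mod_group (2 ^ (Suc (Suc e) div 2)))"
  shows "Delta p q (Suc (Suc e)) \<in>
    hom (J_group p q (Suc (Suc e))) (dihedral (2 ^ (Suc (Suc e) div 2)))"
proof -
  let ?\<psi> = "psi p q (Suc (Suc e))" and ?\<tau> = "psi p q (Suc e)" and ?K = "(2::int) ^ (e div 2)"
  have level: "Suc (Suc e) div 2 = Suc (e div 2)" "Suc e div 2 = e div 2"
    using \<open>even e\<close> by simp_all
  define \<delta> where "\<delta> x = (p + q) * ?\<psi> x - 2 * ?\<tau> (tR x)" for x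
  have Delta_eq: "Delta p q (Suc (Suc e)) = (\<lambda>x. (tf x, \<delta> x mod int (2 * 2 ^ (e div 2))))"
    using assms(1,2) by (simp add: Delta_even \<delta>_def)
  have "tf (tmul x y) = (tf x \<noteq> tf y) \<and>
    [\<delta> (tmul x y) = \<delta> x + (if tf x then - \<delta> y else \<delta> y)] (mod 2 * ?K)"
    if x: "x \<in> J p q (Suc (Suc e))" and y: "y \<in> J p q (Suc (Suc e))" for x y
  proof -
    obtain f A B g C D where xy: "x = Nd f A B" "y = Nd g C D"
      and children: "A \<in> J p q (Suc e)" "B \<in> J p q (Suc e)" "C \<in> J p q (Suc e)" "D \<in> J p q (Suc e)"
      using J_Suc_pairE[OF x y] \<open>2 \<le> e\<close> by (metis le_SucI)
    let ?R = "if f then C else D"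
    have "[?\<psi> (tmul x y) = ?\<psi> x + ?\<psi> y] (mod 2 * ?K)"
      using hom_integer_mod_group_cong[OF \<psi>] x y level by simp
    then have "[(p + q) * ?\<psi> (tmul x y) = (p + q) * (?\<psi> x + ?\<psi> y)] (mod 2 * ?K)"
      by (rule cong_scalar_left)
    moreover have "[?\<tau> (tR (tmul x y)) = ?\<tau> B + ?\<tau> ?R] (mod ?K)"
      using hom_integer_mod_group_cong[OF \<tau>] children level by (cases f) (simp_all add: xy)
    then have "[2 * ?\<tau> (tR (tmul x y)) = 2 * (?\<tau> B + ?\<tau> ?R)] (mod 2 * ?K)"
      by (rule cong_cmult_leftI)
    \<comment> \<open>A flip at the root of \<open>x\<close> negates \<open>\<delta> y\<close>; the defect is twice the difference below.\<close>
    moreover have "[(p + q) * ?\<psi> y = ?\<tau> C + ?\<tau> D] (mod ?K)"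
      using psi_even_children_cong[OF assms(1,2) y] by (simp add: xy)
    then have "[2 * ((p + q) * ?\<psi> y) = 2 * (?\<tau> C + ?\<tau> D)] (mod 2 * ?K)"
      by (rule cong_cmult_leftI)
    moreover have "\<delta> (tmul x y) - (\<delta> x + (if f then - \<delta> y else \<delta> y))
      = ((p + q) * ?\<psi> (tmul x y) - (p + q) * (?\<psi> x + ?\<psi> y))
        - (2 * ?\<tau> (tR (tmul x y)) - 2 * (?\<tau> B + ?\<tau> ?R))
        + (if f then 2 * ((p + q) * ?\<psi> y) - 2 * (?\<tau> C + ?\<tau> D) else 0)"
      using xy by (cases f) (simp_all add: \<delta>_def algebra_simps)
    ultimately show ?thesis
      using xy by (simp add: cong_iff_dvd_diff)
  qed
  then show ?thesis
    unfolding Delta_eq level power_Suc by (intro hom_dihedralI[OF monoid_J_group[OF J]]) simp_all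
qed

lemma level_homs_Suc:
  assumes "even e" "2 \<le> e" and level: "level_homs p q e"
  shows "level_homs p q (Suc e)"
proof -
  have J: "subgroup (J p q (Suc e)) (autT (Suc e + 1))"
    using subgroup_J_Suc \<open>2 \<le> e\<close> level unfolding level_homs_def by simp
  then show ?thesis
    using psi_hom_odd[OF assms(1,2) J] Delta_hom_odd[OF assms(1,2) J] level
    unfolding level_homs_def by blast
qed

lemma level_homs_Suc_Suc:
  assumes "even e" "2 \<le> e" and level: "level_homs p q e" "level_homs p q (Suc e)"
  shows "level_homs p q (Suc (Suc e))"
proof -
  have J: "subgroup (J p q (Suc (Suc e))) (autT (Suc (Suc e) + 1))"
    using subgroup_J_Suc[of "Suc e"] \<open>2 \<le> e\<close> level(2) unfolding level_homs_def by simp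
  have \<psi>: "psi p q (Suc (Suc e)) \<in>
      hom (J_group p q (Suc (Suc e))) (integer_mod_group (2 ^ (Suc (Suc e) div 2)))"
    using psi_hom_even[OF assms(1,2) J] level(1) unfolding level_homs_def by blast
  then show ?thesis
    using J Delta_hom_even[OF assms(1,2) J _ \<psi>] level(2) unfolding level_homs_def by blast
qed

end

theorem theorem1:
  fixes p q :: int and n :: nat
  assumes "p > 0" and "q > 0" and "odd (p + q)" and "n \<ge> 1"
  shows "subgroup (J p q n) (autT (n + 1)) \<and>
    psi p q n \<in> hom ((autT (n + 1))\<lparr>carrier := J p q n\<rparr>) (integer_mod_group (2 ^ (n div 2))) \<and>
    Delta p q n \<in> hom ((autT (n + 1))\<lparr>carrier := J p q n\<rparr>) (dihedral (2 ^ (n div 2)))"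
proof -
  have "level_homs p q m" if "1 \<le> m" for m
    using that
  proof (induction m rule: less_induct)
    case (less m)
    have "m = 1 \<or> m = 2 \<or> (\<exists>e. m = Suc e \<and> even e \<and> 2 \<le> e) \<or> (\<exists>e. m = Suc (Suc e) \<and> even e \<and> 2 \<le> e)"
      using less.prems by presburger
    then show ?case
      using level_homs_1 level_homs_2 less.IH
        level_homs_Suc[OF \<open>odd (p + q)\<close>] level_homs_Suc_Suc[OF \<open>odd (p + q)\<close>] by auto
  qed
  then show ?thesis
    using \<open>n \<ge> 1\<close> unfolding level_homs_def by blast
qed

end
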